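(* The dimension of any compact $\Phi$-SSU Riemannian manifold is greater than $4$.
   Context: A Riemannian $n$-manifold $N$ is $\Phi$-SSU if there is an isometric immersion $N\to\mathbb R^q$ with second fundamental form $\mathsf B$ such that for every $y\in N$ and every unit $\mathsf x\in T_yN$, $\sum_{\beta=1}^n\big(4|\mathsf B(\mathsf x,\mathsf e_\beta)|^2-\langle \mathsf B(\mathsf x,\mathsf x),\mathsf B(\mathsf e_\beta,\mathsf e_\beta)\rangle\big)<0$, where $\{\mathsf e_\beta\}$ is an orthonormal basis of $T_yN$. *)

theory Defs
  imports "HOL-Analysis.Analysis"
begin

fun Ck_on :: "nat \<Rightarrow> 'a::euclidean_space set \<Rightarrow> ('a \<Rightarrow> 'b::real_normed_vector) \<Rightarrow> bool" where
  "Ck_on 0 S f = continuous_on S f"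
| "Ck_on (Suc k) S f =
     ((\<forall>x\<in>S. f differentiable (at x)) \<and>
      (\<forall>v. Ck_on k S (\<lambda>x. frechet_derivative f (at x) v)))"

definition smooth_on :: "'a::euclidean_space set \<Rightarrow> ('a \<Rightarrow> 'b::real_normed_vector) \<Rightarrow> bool" where
  "smooth_on S f \<longleftrightarrow> (\<forall>k. Ck_on k S f)"

definition is_chart :: "'a topology \<Rightarrow> ('a \<Rightarrow> real^'n) \<Rightarrow> 'a set \<Rightarrow> bool" where
  "is_chart X \<phi> U \<longleftrightarrow> openin X U \<and> open (\<phi> ` U) \<and>
     homeomorphic_map (subtopology X U) (top_of_set (\<phi> ` U)) \<phi>"

definition smooth_atlas :: "'a topology \<Rightarrow> (('a \<Rightarrow> real^'n) \<times> 'a set) set \<Rightarrow> bool" where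
  "smooth_atlas X A \<longleftrightarrow>
     (\<forall>(\<phi>, U)\<in>A. is_chart X \<phi> U) \<and>
     \<Union> (snd ` A) = topspace X \<and>
     (\<forall>(\<phi>, U)\<in>A. \<forall>(\<psi>, V)\<in>A. smooth_on (\<phi> ` (U \<inter> V)) (\<psi> \<circ> inv_into U \<phi>))"

definition compact_smooth_manifold :: "'a topology \<Rightarrow> (('a \<Rightarrow> real^'n) \<times> 'a set) set \<Rightarrow> bool" where
  "compact_smooth_manifold X A \<longleftrightarrow>
     topspace X \<noteq> {} \<and> Hausdorff_space X \<and> compact_space X \<and> smooth_atlas X A"

definition local_rep :: "('a \<Rightarrow> real^'q) \<Rightarrow> ('a \<Rightarrow> real^'n) \<Rightarrow> 'a set \<Rightarrow> real^'n \<Rightarrow> real^'q" where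
  "local_rep F \<phi> U = F \<circ> inv_into U \<phi>"

definition smooth_immersion ::
  "'a topology \<Rightarrow> (('a \<Rightarrow> real^'n) \<times> 'a set) set \<Rightarrow> ('a \<Rightarrow> real^'q) \<Rightarrow> bool" where
  "smooth_immersion X A F \<longleftrightarrow>
     (\<forall>(\<phi>, U)\<in>A. smooth_on (\<phi> ` U) (local_rep F \<phi> U) \<and>
        (\<forall>u\<in>\<phi> ` U. inj (frechet_derivative (local_rep F \<phi> U) (at u))))"

definition ind_metric :: "(real^'n \<Rightarrow> real^'q) \<Rightarrow> real^'n \<Rightarrow> real^'n \<Rightarrow> real^'n \<Rightarrow> real" where
  "ind_metric f u v w = frechet_derivative f (at u) v \<bullet> frechet_derivative f (at u) w"

definition normal_part :: "'b::euclidean_space set \<Rightarrow> 'b \<Rightarrow> 'b" where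
  "normal_part T z = z - (THE p. p \<in> T \<and> (\<forall>t\<in>T. (z - p) \<bullet> t = 0))"

definition sff :: "(real^'n \<Rightarrow> real^'q) \<Rightarrow> real^'n \<Rightarrow> real^'n \<Rightarrow> real^'n \<Rightarrow> real^'q" where
  "sff f u v w =
     normal_part (range (frechet_derivative f (at u)))
       (frechet_derivative (\<lambda>y. frechet_derivative f (at y) w) (at u) v)"

definition g_orthonormal_basis :: "(real^'n \<Rightarrow> real^'n \<Rightarrow> real) \<Rightarrow> ('n \<Rightarrow> real^'n) \<Rightarrow> bool" where
  "g_orthonormal_basis g e \<longleftrightarrow> (\<forall>i j. g (e i) (e j) = (if i = j then 1 else 0))"

definition Phi_SSU_immersion ::
  "'a topology \<Rightarrow> (('a \<Rightarrow> real^'n) \<times> 'a set) set \<Rightarrow> ('a \<Rightarrow> real^'q) \<Rightarrow> bool" where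
  "Phi_SSU_immersion X A F \<longleftrightarrow>
     (\<forall>(\<phi>, U)\<in>A. \<forall>u\<in>\<phi> ` U.
        let f = local_rep F \<phi> U; g = ind_metric f u; B = sff f u in
        \<forall>x e. g x x = 1 \<longrightarrow> g_orthonormal_basis g e \<longrightarrow>
          (\<Sum>\<beta>\<in>UNIV. 4 * (norm (B x (e \<beta>)))\<^sup>2 - B x x \<bullet> B (e \<beta>) (e \<beta>)) < 0)"

text \<open>A compact Riemannian n-manifold is Phi-SSU iff it is (up to isometry) a compact
smooth manifold with the metric induced by a smooth immersion F into some R^q
satisfying the condition above.\<close>
definition compact_Phi_SSU ::
  "'a topology \<Rightarrow> (('a \<Rightarrow> real^'n) \<times> 'a set) set \<Rightarrow> ('a \<Rightarrow> real^'q) \<Rightarrow> bool" where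
  "compact_Phi_SSU X A F \<longleftrightarrow>
     compact_smooth_manifold X A \<and> smooth_immersion X A F \<and> Phi_SSU_immersion X A F"

end

theory Submission
  imports Defs
begin

text \<open>Fix a point, take an orthonormal frame \<open>e\<^sub>1, \<dots>, e\<^sub>n\<close> of the induced metric there and
write \<open>B\<^sub>\<alpha>\<^sub>\<beta> = B(e\<^sub>\<alpha>, e\<^sub>\<beta>)\<close> and \<open>H = \<Sum>\<^sub>\<beta> B\<^sub>\<beta>\<^sub>\<beta>\<close>. Summing the \<open>\<Phi>\<close>-SSU inequality
over \<open>x = e\<^sub>\<alpha>\<close> gives \<open>4 \<Sum>\<^sub>\<alpha>\<^sub>\<beta> |B\<^sub>\<alpha>\<^sub>\<beta>|\<^sup>2 < |H|\<^sup>2\<close>, while Cauchy-Schwarz gives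
\<open>|H|\<^sup>2 \<le> n \<Sum>\<^sub>\<beta> |B\<^sub>\<beta>\<^sub>\<beta>|\<^sup>2 \<le> n \<Sum>\<^sub>\<alpha>\<^sub>\<beta> |B\<^sub>\<alpha>\<^sub>\<beta>|\<^sup>2\<close>. Hence \<open>4 < n\<close>.\<close>

lemma norm_sum_squared_le_card_sum_squares:
  fixes f :: "'i \<Rightarrow> 'b::real_normed_vector"
  shows "(norm (\<Sum>i\<in>I. f i))\<^sup>2 \<le> real (card I) * (\<Sum>i\<in>I. (norm (f i))\<^sup>2)"
proof -
  have "(norm (\<Sum>i\<in>I. f i))\<^sup>2 \<le> (\<Sum>i\<in>I. norm (f i))\<^sup>2"
    by (rule power_mono[OF norm_sum norm_ge_zero])
  also have "\<dots> \<le> (\<Sum>i\<in>I. (norm (f i))\<^sup>2) * real (card I)"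
    by (rule sum_squared_le_sum_of_squares)
  finally show ?thesis
    by (simp add: mult.commute)
qed

lemma sum_Phi_form_eq:
  fixes B :: "'i \<Rightarrow> 'i \<Rightarrow> 'b::real_inner"
  shows "(\<Sum>\<alpha>\<in>I. \<Sum>\<beta>\<in>I. 4 * (norm (B \<alpha> \<beta>))\<^sup>2 - B \<alpha> \<alpha> \<bullet> B \<beta> \<beta>)
    = 4 * (\<Sum>\<alpha>\<in>I. \<Sum>\<beta>\<in>I. (norm (B \<alpha> \<beta>))\<^sup>2) - (norm (\<Sum>\<beta>\<in>I. B \<beta> \<beta>))\<^sup>2"
proof -
  have "(norm (\<Sum>\<beta>\<in>I. B \<beta> \<beta>))\<^sup>2 = (\<Sum>\<alpha>\<in>I. \<Sum>\<beta>\<in>I. B \<alpha> \<alpha> \<bullet> B \<beta> \<beta>)"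
    by (simp add: power2_norm_eq_inner inner_sum_left inner_sum_right) (rule sum.swap)
  then show ?thesis
    by (simp add: sum_subtractf sum_distrib_left)
qed

lemma card_gt_4_if_Phi_form_neg:
  fixes B :: "'i \<Rightarrow> 'i \<Rightarrow> 'b::real_inner"
  assumes "finite I" and "I \<noteq> {}"
    and Phi_neg: "\<And>\<alpha>. \<alpha> \<in> I \<Longrightarrow> (\<Sum>\<beta>\<in>I. 4 * (norm (B \<alpha> \<beta>))\<^sup>2 - B \<alpha> \<alpha> \<bullet> B \<beta> \<beta>) < 0"
  shows "card I > 4"
proof -
  define T where "T = (\<Sum>\<alpha>\<in>I. \<Sum>\<beta>\<in>I. (norm (B \<alpha> \<beta>))\<^sup>2)"
  define H where "H = (\<Sum>\<beta>\<in>I. B \<beta> \<beta>)"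
  have "(\<Sum>\<alpha>\<in>I. \<Sum>\<beta>\<in>I. 4 * (norm (B \<alpha> \<beta>))\<^sup>2 - B \<alpha> \<alpha> \<bullet> B \<beta> \<beta>) < 0"
    using sum_strict_mono[OF assms(1,2) Phi_neg] by simp
  then have "4 * T < (norm H)\<^sup>2"
    by (simp add: sum_Phi_form_eq T_def H_def)
  also have "\<dots> \<le> real (card I) * (\<Sum>\<beta>\<in>I. (norm (B \<beta> \<beta>))\<^sup>2)"
    unfolding H_def by (rule norm_sum_squared_le_card_sum_squares)
  also have "\<dots> \<le> real (card I) * T"
    unfolding T_def
    by (intro mult_left_mono sum_mono member_le_sum) (auto intro: \<open>finite I\<close>)
  finally have "4 * T < real (card I) * T" .
  moreover have "T \<ge> 0"
    by (simp add: T_def sum_nonneg)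
  ultimately show ?thesis
    by (metis mult_right_less_imp_less of_nat_less_iff of_nat_numeral)
qed

lemma inj_linear_pullback_orthonormal_basis:
  fixes L :: "real^'n \<Rightarrow> 'b::euclidean_space"
  assumes "linear L" and "inj L"
  obtains e where "g_orthonormal_basis (\<lambda>v w. L v \<bullet> L w) e"
proof -
  obtain Bs where Bs: "Bs \<subseteq> range L" "pairwise orthogonal Bs" "\<And>b. b \<in> Bs \<Longrightarrow> norm b = 1"
    "independent Bs" "card Bs = dim (range L)"
    using orthonormal_basis_subspace[OF linear_subspace_image[OF assms(1) subspace_UNIV]]
    by metis
  have "dim (range L) = CARD('n)"
    using dim_image_eq[OF assms(1)] assms(2) by (simp add: inj_on_subset)
  then obtain h where h: "bij_betw h (UNIV::'n set) Bs"
    using Bs(4,5) finiteI_independent finite_same_card_bij[of "UNIV::'n set" Bs] by auto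
  define e where "e i = inv L (h i)" for i
  have "L (e i) = h i" for i
    unfolding e_def using h Bs(1) by (metis bij_betwE f_inv_into_f subsetD UNIV_I)
  moreover have "h i \<bullet> h j = (if i = j then 1 else 0)" for i j
  proof (cases "i = j")
    case True
    then show ?thesis
      using Bs(3) h by (simp add: dot_square_norm bij_betwE)
  next
    case False
    then have "orthogonal (h i) (h j)"
      using Bs(2) h by (simp add: pairwise_def bij_betw_iff_bijections) metis
    then show ?thesis
      using False by (simp add: orthogonal_def)
  qed
  ultimately show thesis
    by (intro that[of e]) (simp add: g_orthonormal_basis_def)
qed

lemma smooth_immersion_local_derivative:
  assumes "smooth_immersion X A F" and "(\<phi>, U) \<in> A" and "u \<in> \<phi> ` U"
  shows "linear (frechet_derivative (local_rep F \<phi> U) (at u))"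
    and "inj (frechet_derivative (local_rep F \<phi> U) (at u))"
proof -
  have "smooth_on (\<phi> ` U) (local_rep F \<phi> U)"
    using assms by (auto simp: smooth_immersion_def)
  then have "Ck_on 1 (\<phi> ` U) (local_rep F \<phi> U)"
    by (simp add: smooth_on_def)
  then have "local_rep F \<phi> U differentiable (at u)"
    using assms(3) by auto
  then show "linear (frechet_derivative (local_rep F \<phi> U) (at u))"
    using frechet_derivative_works has_derivative_linear by blast
  show "inj (frechet_derivative (local_rep F \<phi> U) (at u))"
    using assms by (auto simp: smooth_immersion_def)
qed

theorem theorem7p1:
  fixes X :: "'a topology"
    and A :: "(('a \<Rightarrow> real^'n::finite) \<times> 'a set) set"
    and F :: "'a \<Rightarrow> real^'q::finite"
  assumes "compact_Phi_SSU X A F"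
  shows "CARD('n) > 4"
proof -
  have immersion: "smooth_immersion X A F" and Phi_SSU: "Phi_SSU_immersion X A F"
    using assms by (simp_all add: compact_Phi_SSU_def)
  have "topspace X \<noteq> {}" "\<Union> (snd ` A) = topspace X"
    using assms by (auto simp: compact_Phi_SSU_def compact_smooth_manifold_def smooth_atlas_def)
  then obtain \<phi> U y where chart: "(\<phi>, U) \<in> A" and "y \<in> U"
    by fastforce
  define f where "f = local_rep F \<phi> U"
  have u: "\<phi> y \<in> \<phi> ` U"
    using \<open>y \<in> U\<close> by simp
  obtain e where e: "g_orthonormal_basis (ind_metric f (\<phi> y)) e"
    using inj_linear_pullback_orthonormal_basis[OF smooth_immersion_local_derivative[OF immersion chart u]]
    unfolding ind_metric_def f_def by blast
  have "\<forall>x e. ind_metric f (\<phi> y) x x = 1 \<longrightarrow> g_orthonormal_basis (ind_metric f (\<phi> y)) e \<longrightarrow>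
      (\<Sum>\<beta>\<in>UNIV. 4 * (norm (sff f (\<phi> y) x (e \<beta>)))\<^sup>2
        - sff f (\<phi> y) x x \<bullet> sff f (\<phi> y) (e \<beta>) (e \<beta>)) < 0"
    using Phi_SSU chart u unfolding Phi_SSU_immersion_def f_def Let_def by fastforce
  moreover have "ind_metric f (\<phi> y) (e \<alpha>) (e \<alpha>) = 1" for \<alpha>
    using e by (simp add: g_orthonormal_basis_def)
  ultimately show ?thesis
    using card_gt_4_if_Phi_form_neg[of UNIV "\<lambda>\<alpha> \<beta>. sff f (\<phi> y) (e \<alpha>) (e \<beta>)"] e by auto
qed

end
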